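(* For every $n$, $\mu_n>0$, $\theta\in\mathbb R$ and $x\in\mathbb R$, $$F_{A,n,\theta}(x)=\mathbf 1(n^{1/2}\theta+x\ge0)\,\Phi\big(z^{(2)}_{n,\theta}(x)\big)+\mathbf 1(n^{1/2}\theta+x<0)\,\Phi\big(z^{(1)}_{n,\theta}(x)\big).$$ Consequently the distribution of $n^{1/2}(\hat\theta_A-\theta)$ is the sum of an atom of mass $\Phi(n^{1/2}(-\theta+\mu_n))-\Phi(n^{1/2}(-\theta-\mu_n))$ at the point $-n^{1/2}\theta$ and an absolutely continuous part with Lebesgue density $$\tfrac12\Big\{\mathbf 1(n^{1/2}\theta+x>0)\,\phi\big(z^{(2)}_{n,\theta}(x)\big)(1+t_{n,\theta}(x))+\mathbf 1(n^{1/2}\theta+x<0)\,\phi\big(z^{(1)}_{n,\theta}(x)\big)(1-t_{n,\theta}(x))\Big\},$$ where $t_{n,\theta}(x)=\tfrac12(n^{1/2}\theta+x)\big/\big(((n^{1/2}\theta+x)/2)^2+n\mu_n^2\big)^{1/2}$.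
   Context: Gaussian location model: for each sample size $n$, $y_1,\dots,y_n$ are i.i.d. $N(\theta,1)$ with $\theta\in\mathbb R$ unknown; $\bar y$ is their mean. $P_{n,\theta}$ denotes the probability governing a sample of size $n$ when $\theta$ is the true parameter. Given a nonrandom tuning parameter $\mu_n>0$, the adaptive LASSO estimator is $\hat\theta_A=0$ if $|\bar y|\le\mu_n$ and $\hat\theta_A=\bar y-\mu_n^2/\bar y$ if $|\bar y|>\mu_n$. $F_{A,n,\theta}(x)=P_{n,\theta}(n^{1/2}(\hat\theta_A-\theta)\le x)$. $\Phi,\phi$ are the standard normal cdf and density. For $x\in\mathbb R$, $$z^{(1)}_{n,\theta}(x)=-\frac{n^{1/2}\theta-x}{2}-\sqrt{\Big(\frac{n^{1/2}\theta+x}{2}\Big)^2+n\mu_n^2},\qquad z^{(2)}_{n,\theta}(x)=-\frac{n^{1/2}\theta-x}{2}+\sqrt{\Big(\frac{n^{1/2}\theta+x}{2}\Big)^2+n\mu_n^2}.$$ *)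

theory Defs
  imports "HOL-Probability.Probability"
begin

definition phi :: "real \<Rightarrow> real" where
  "phi x = std_normal_density x"

definition Phi :: "real \<Rightarrow> real" where
  "Phi x = (LINT t:{..x}|lborel. std_normal_density t)"

definition P :: "nat \<Rightarrow> real \<Rightarrow> (nat \<Rightarrow> real) measure" where
  "P n \<theta> = PiM {..<n} (\<lambda>_. density lborel (normal_density \<theta> 1))"

definition ybar :: "nat \<Rightarrow> (nat \<Rightarrow> real) \<Rightarrow> real" where
  "ybar n y = (\<Sum>i<n. y i) / real n"

text \<open>Adaptive LASSO as a function of the sample mean and tuning parameter mu.\<close>
definition thetaA :: "real \<Rightarrow> real \<Rightarrow> real" where
  "thetaA \<mu> yb = (if \<bar>yb\<bar> \<le> \<mu> then 0 else yb - \<mu>\<^sup>2 / yb)"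

definition FA :: "nat \<Rightarrow> real \<Rightarrow> real \<Rightarrow> real \<Rightarrow> real" where
  "FA n \<mu> \<theta> x = measure (P n \<theta>)
     {y \<in> space (P n \<theta>). sqrt (real n) * (thetaA \<mu> (ybar n y) - \<theta>) \<le> x}"

definition z1 :: "nat \<Rightarrow> real \<Rightarrow> real \<Rightarrow> real \<Rightarrow> real" where
  "z1 n \<mu> \<theta> x = - (sqrt (real n) * \<theta> - x) / 2
     - sqrt (((sqrt (real n) * \<theta> + x) / 2)\<^sup>2 + real n * \<mu>\<^sup>2)"

definition z2 :: "nat \<Rightarrow> real \<Rightarrow> real \<Rightarrow> real \<Rightarrow> real" where
  "z2 n \<mu> \<theta> x = - (sqrt (real n) * \<theta> - x) / 2
     + sqrt (((sqrt (real n) * \<theta> + x) / 2)\<^sup>2 + real n * \<mu>\<^sup>2)"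

definition tA :: "nat \<Rightarrow> real \<Rightarrow> real \<Rightarrow> real \<Rightarrow> real" where
  "tA n \<mu> \<theta> x = ((sqrt (real n) * \<theta> + x) / 2)
     / sqrt (((sqrt (real n) * \<theta> + x) / 2)\<^sup>2 + real n * \<mu>\<^sup>2)"

definition densA :: "nat \<Rightarrow> real \<Rightarrow> real \<Rightarrow> real \<Rightarrow> real" where
  "densA n \<mu> \<theta> x = (1/2) *
     ((if sqrt (real n) * \<theta> + x > 0 then phi (z2 n \<mu> \<theta> x) * (1 + tA n \<mu> \<theta> x) else 0)
    + (if sqrt (real n) * \<theta> + x < 0 then phi (z1 n \<mu> \<theta> x) * (1 - tA n \<mu> \<theta> x) else 0))"

end

theory Submission
  imports Defs
begin

(* Write W = sqrt n (ybar - theta) ~ N(0,1), kn = sqrt n theta and q = n mu^2.  Scaling shows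
   sqrt n (thetaA - theta) = H W with H w = g (w + kn) - kn, where g s = 0 on the dead zone
   |s| <= sqrt q and g s = s - q/s outside it.  The map g is nondecreasing with sublevel
   sets {s <= root c}, root c being the appropriate root of s^2 - c s - q; this gives the
   cdf Phi(z2 x) resp. Phi(z1 x).  The dead zone is mapped to the single point -kn, which
   therefore carries the atom Phi(sqrt q - kn) - Phi(-sqrt q - kn).  Away from -kn the cdf
   is differentiable with derivative densA, and a general uniqueness argument for
   measures determined by their upper tails yields the atom-plus-density decomposition. *)

lemma indep_vars_PiM_components:
  assumes M: "\<And>i. i \<in> I \<Longrightarrow> prob_space (M i)" and I: "I \<noteq> {}"
  shows "prob_space.indep_vars (PiM I M) M (\<lambda>i x. x i) I"
proof -
  interpret prob_space "PiM I M" using M by (rule prob_space_PiM)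
  have "distr (PiM I M) (PiM I M) (\<lambda>x. restrict x I) = distr (PiM I M) (PiM I M) (\<lambda>x. x)"
    by (rule distr_cong) (auto simp: space_PiM)
  also have "\<dots> = (\<Pi>\<^sub>M i\<in>I. distr (PiM I M) (M i) (\<lambda>x. x i))"
    by (auto intro!: PiM_cong simp: distr_PiM_component M)
  finally show ?thesis
    by (subst indep_vars_iff_distr_eq_PiM'[OF I]) auto
qed

lemma sum_iid_normal:
  fixes m :: real
  assumes "finite I" "I \<noteq> {}" "\<sigma> > 0"
  shows "distributed (\<Pi>\<^sub>M i\<in>I. density lborel (normal_density m \<sigma>)) lborel
           (\<lambda>y. \<Sum>i\<in>I. y i) (normal_density (card I * m) (sqrt (card I) * \<sigma>))"
proof -
  let ?N = "density lborel (normal_density m \<sigma>)"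
  have N: "prob_space ?N" using assms(3) by (rule prob_space_normal_density)
  interpret prob_space "\<Pi>\<^sub>M i\<in>I. ?N" using N by (rule prob_space_PiM)
  have comp: "distributed (\<Pi>\<^sub>M i\<in>I. ?N) lborel (\<lambda>y. y i) (normal_density m \<sigma>)"
    if "i \<in> I" for i
  proof -
    have "distr (\<Pi>\<^sub>M i\<in>I. ?N) lborel (\<lambda>y. y i) = distr (\<Pi>\<^sub>M i\<in>I. ?N) ?N (\<lambda>y. y i)"
      by (rule distr_cong) auto
    also have "\<dots> = ?N" using N that by (rule distr_PiM_component)
    finally show ?thesis unfolding distributed_def using that by auto
  qed
  have "distributed (\<Pi>\<^sub>M i\<in>I. ?N) lborel (\<lambda>y. \<Sum>i\<in>I. y i)
          (normal_density (\<Sum>i\<in>I. m) (sqrt (\<Sum>i\<in>I. \<sigma>\<^sup>2)))"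
    using indep_vars_PiM_components[of I "\<lambda>_. ?N", OF N assms(2)]
    by (intro sum_indep_normal assms comp)
      (simp_all add: indep_vars_def2 cong: measurable_cong_sets)
  then show ?thesis using assms(3) by (simp add: real_sqrt_mult)
qed

lemma standardized_mean_distributed:
  assumes "n \<ge> 1"
  shows "distributed (P n \<theta>) lborel (\<lambda>y. sqrt (real n) * (ybar n y - \<theta>)) std_normal_density"
proof -
  have pos: "sqrt (real n) > 0" using assms by simp
  interpret prob_space "P n \<theta>"
    unfolding P_def by (auto intro!: prob_space_PiM prob_space_normal_density)
  have "distributed (P n \<theta>) lborel (\<lambda>y. \<Sum>i<n. y i) (normal_density (real n * \<theta>) (sqrt (real n)))"
  proof -
    have "0 \<in> {..<n}" using assms by simp
    then have "{..<n} \<noteq> {}" by blast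
    then show ?thesis using sum_iid_normal[of "{..<n}" 1 \<theta>] unfolding P_def by simp
  qed
  then have "distributed (P n \<theta>) lborel
      (\<lambda>y. ((\<Sum>i<n. y i) - real n * \<theta>) / sqrt (real n)) std_normal_density"
    using normal_standard_normal_convert[OF pos] by simp
  moreover have "((\<Sum>i<n. y i) - real n * \<theta>) / sqrt (real n) = sqrt (real n) * (ybar n y - \<theta>)" for y
  proof -
    have "real n = sqrt (real n) * sqrt (real n)" by simp
    then show ?thesis using pos unfolding ybar_def by (simp add: field_simps)
  qed
  ultimately show ?thesis by simp
qed

abbreviation N01 :: "real measure" where
  "N01 \<equiv> density lborel std_normal_density"

lemma std_normal_integrable: "integrable lborel std_normal_density"
  using integrable_std_normal_moment[of 0] by simp

lemma std_normal_set_integrable: "S \<in> sets borel \<Longrightarrow> set_integrable lborel S std_normal_density"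
  unfolding set_integrable_def by (rule integrable_mult_indicator) (auto simp: std_normal_integrable)

lemma N01_measure:
  assumes "S \<in> sets borel"
  shows "measure N01 S = (LINT x:S|lborel. std_normal_density x)"
proof -
  have "emeasure N01 S = (\<integral>\<^sup>+x. ennreal (std_normal_density x) * indicator S x \<partial>lborel)"
    using assms by (simp add: emeasure_density)
  also have "\<dots> = (\<integral>\<^sup>+x. ennreal (indicator S x * std_normal_density x) \<partial>lborel)"
    by (intro nn_integral_cong) (auto split: split_indicator)
  also have "\<dots> = ennreal (LINT x:S|lborel. std_normal_density x)"
    unfolding set_lebesgue_integral_def
    using std_normal_set_integrable[OF assms] unfolding set_integrable_def
    by (subst nn_integral_eq_integral) auto
  finally show ?thesis unfolding measure_def
    by (simp add: set_lebesgue_integral_def integral_nonneg_AE)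
qed

lemma N01_real_distribution: "real_distribution N01"
  by (simp add: real_distribution_def real_distribution_axioms_def prob_space_normal_density)

lemma Phi_eq_cdf: "Phi = cdf N01"
  by (rule ext) (simp add: Phi_def cdf_def N01_measure)

lemma Phi_at_top: "(Phi \<longlongrightarrow> 1) at_top"
  unfolding Phi_eq_cdf by (rule real_distribution.cdf_lim_at_top_prob[OF N01_real_distribution])

lemma Phi_at_bot: "(Phi \<longlongrightarrow> 0) at_bot"
  unfolding Phi_eq_cdf
  by (rule finite_borel_measure.cdf_lim_at_bot
        [OF real_distribution.finite_borel_measure_M[OF N01_real_distribution]])

(* Writing Phi as a signed interval integral from 0 lets us apply the fundamental
   theorem of calculus: Phi is differentiable everywhere with derivative phi. *)
lemma Phi_eq_interval_integral: "Phi x = (LBINT t=-\<infinity>..ereal x. std_normal_density t)"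
proof -
  have "(LBINT t=-\<infinity>..ereal x. std_normal_density t) = (LBINT t:{..<x}. std_normal_density t)"
    by (simp add: interval_lebesgue_integral_def)
  also have "\<dots> = (LBINT t:{..x}. std_normal_density t)"
    by (rule set_integral_discrete_difference[where X="{x}"]) auto
  finally show ?thesis unfolding Phi_def ..
qed

lemma Phi_split_at_0: "Phi x = Phi 0 + (LBINT t=0..x. std_normal_density t)"
proof -
  have "interval_lebesgue_integrable lborel a b std_normal_density" for a b
    unfolding interval_lebesgue_integrable_def by (auto intro!: std_normal_set_integrable)
  then have "(LBINT t=-\<infinity>..0. std_normal_density t) + (LBINT t=0..x. std_normal_density t)
      = (LBINT t=-\<infinity>..x. std_normal_density t)"
    by (rule interval_integral_sum)
  then show ?thesis by (simp add: Phi_eq_interval_integral zero_ereal_def)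
qed

lemma Phi_has_derivative: "(Phi has_real_derivative phi x) (at x)"
proof -
  define a where "a = - \<bar>x\<bar> - 1"
  define b where "b = \<bar>x\<bar> + 1"
  let ?I = "\<lambda>u. LBINT t=ereal 0..u. std_normal_density t"
  have "(?I has_vector_derivative std_normal_density x) (at x within {a..b})"
    by (rule interval_integral_FTC2)
      (auto simp: a_def b_def normal_density_def intro!: continuous_intros)
  then have "(?I has_vector_derivative std_normal_density x) (at x)"
    by (subst (asm) at_within_interior[of x]) (auto simp: a_def b_def)
  then have "((\<lambda>u. Phi 0 + ?I u) has_real_derivative std_normal_density x) (at x)"
    by (auto intro!: derivative_eq_intros simp: has_real_derivative_iff_has_vector_derivative)
  moreover have "(\<lambda>u. Phi 0 + ?I u) = Phi"
    by (rule ext) (rule Phi_split_at_0[symmetric, unfolded zero_ereal_def])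
  ultimately show ?thesis unfolding phi_def by simp
qed

lemma isCont_phi: "isCont phi x"
  unfolding phi_def normal_density_def by (intro continuous_intros) auto

(* N01 has no atoms, so the mass of a closed interval is a difference of Phi values. *)
lemma N01_atLeastAtMost:
  assumes "a \<le> b"
  shows "measure N01 {a..b} = Phi b - Phi a"
proof -
  have "measure N01 {a..b} = (LBINT t=a..b. std_normal_density t)"
    using assms by (simp add: N01_measure interval_integral_Icc)
  also have "\<dots> = Phi b - Phi a"
  proof (rule interval_integral_FTC_finite)
    show "continuous_on {min a b..max a b} std_normal_density"
      by (auto intro!: continuous_intros simp: normal_density_def)
    show "(Phi has_vector_derivative std_normal_density t) (at t within {min a b..max a b})" for t
      using Phi_has_derivative[of t]
      unfolding phi_def has_real_derivative_iff_has_vector_derivative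
      by (rule has_vector_derivative_at_within)
  qed
  finally show ?thesis .
qed

(* In the scaled coordinate s = sqrt n ybar the estimator becomes the map below with
   q = n mu^2: zero on the dead zone |s| <= sqrt q, the hyperbola s - q/s outside it. *)
definition alasso_map :: "real \<Rightarrow> real \<Rightarrow> real" where
  "alasso_map q s = (if \<bar>s\<bar> \<le> sqrt q then 0 else s - q / s)"

(* The generalised inverse of alasso_map q at level c: the larger root of
   s^2 - c s - q = 0 for c >= 0, the smaller one for c < 0. *)
definition alasso_root :: "real \<Rightarrow> real \<Rightarrow> real" where
  "alasso_root q c =
     (if 0 \<le> c then c / 2 + sqrt ((c / 2)\<^sup>2 + q) else c / 2 - sqrt ((c / 2)\<^sup>2 + q))"

lemma thetaA_scaled:
  assumes "a > 0" and "\<mu> \<ge> 0"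
  shows "a * thetaA \<mu> b = alasso_map ((a * \<mu>)\<^sup>2) (a * b)"
proof -
  have "\<bar>a * b\<bar> \<le> sqrt ((a * \<mu>)\<^sup>2) \<longleftrightarrow> \<bar>b\<bar> \<le> \<mu>"
    using assms by (simp add: abs_mult)
  moreover have "(a * \<mu>)\<^sup>2 / (a * b) = a * (\<mu>\<^sup>2 / b)" if "b \<noteq> 0"
    using assms that by (simp add: field_simps power2_eq_square)
  ultimately show ?thesis
    using assms unfolding thetaA_def alasso_map_def by (auto simp: algebra_simps)
qed

(* On each branch s > 0 / s < 0 the hyperbola s - q/s is increasing, so a sublevel set
   is bounded by the root of s^2 - c s - q on that branch. *)
lemma hyperbola_branch_le_iff:
  fixes q c s :: real
  assumes "q > 0" and "s \<noteq> 0"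
  defines "r \<equiv> sqrt ((c / 2)\<^sup>2 + q)"
  shows "s - q / s \<le> c \<longleftrightarrow> (if 0 < s then s \<le> c / 2 + r else s \<le> c / 2 - r)"
proof -
  have r2: "r\<^sup>2 = (c / 2)\<^sup>2 + q" unfolding r_def using assms(1) by simp
  have "sqrt ((c / 2)\<^sup>2) < r"
    unfolding r_def using assms(1) by (intro real_sqrt_less_mono) simp
  then have roots: "c / 2 - r < 0" "0 < c / 2 + r" by auto
  have factor: "s\<^sup>2 - c * s - q = (s - (c / 2 + r)) * (s - (c / 2 - r))"
    using r2 by (simp add: algebra_simps power2_eq_square)
  show ?thesis
  proof (cases "0 < s")
    case True
    then have "s - q / s \<le> c \<longleftrightarrow> s\<^sup>2 - c * s - q \<le> 0"
      by (simp add: field_simps power2_eq_square)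
    also have "\<dots> \<longleftrightarrow> s \<le> c / 2 + r"
      unfolding factor using True roots by (simp add: mult_le_0_iff)
    finally show ?thesis using True by simp
  next
    case False
    then have "s < 0" using assms(2) by simp
    then have "s - q / s \<le> c \<longleftrightarrow> 0 \<le> s\<^sup>2 - c * s - q"
      by (simp add: field_simps power2_eq_square)
    also have "\<dots> \<longleftrightarrow> s \<le> c / 2 - r"
      unfolding factor using \<open>s < 0\<close> roots by (simp add: zero_le_mult_iff)
    finally show ?thesis using False by simp
  qed
qed

(* The dead zone only matters through
   the bounds sqrt q <= r <= |c/2| + sqrt q on r = sqrt((c/2)^2 + q). *)
lemma alasso_map_le_iff:
  fixes q c s :: real
  assumes q: "q > 0"
  shows "alasso_map q s \<le> c \<longleftrightarrow> s \<le> alasso_root q c"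
proof -
  define r where "r = sqrt ((c / 2)\<^sup>2 + q)"
  define m where "m = sqrt q"
  have m_pos: "0 < m" unfolding m_def using q by simp
  have bounds: "m \<le> r" "r \<le> \<bar>c / 2\<bar> + m"
    unfolding r_def m_def using sqrt_add_le_add_sqrt[of "(c / 2)\<^sup>2" q] q by simp_all
  consider "\<bar>s\<bar> \<le> m" | "s > m" | "s < -m" by linarith
  then show ?thesis
  proof cases
    case 1
    then show ?thesis using bounds
      unfolding alasso_map_def alasso_root_def m_def[symmetric] r_def[symmetric] by auto
  next
    case 2
    then have "alasso_map q s \<le> c \<longleftrightarrow> s \<le> c / 2 + r"
      using hyperbola_branch_le_iff[OF q, of s c] m_pos
      unfolding alasso_map_def m_def[symmetric] r_def[symmetric] by auto
    then show ?thesis using 2 bounds m_pos unfolding alasso_root_def r_def[symmetric] by auto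
  next
    case 3
    then have "alasso_map q s \<le> c \<longleftrightarrow> s \<le> c / 2 - r"
      using hyperbola_branch_le_iff[OF q, of s c] m_pos
      unfolding alasso_map_def m_def[symmetric] r_def[symmetric] by auto
    then show ?thesis using 3 bounds m_pos unfolding alasso_root_def r_def[symmetric] by auto
  qed
qed

(* The preimage of 0 is exactly the dead zone, since the hyperbola has no zero
   outside it. *)
lemma alasso_map_eq_0_iff:
  assumes "q > 0"
  shows "alasso_map q s = 0 \<longleftrightarrow> \<bar>s\<bar> \<le> sqrt q"
proof -
  have "s - q / s \<noteq> 0" if "\<bar>s\<bar> > sqrt q"
  proof
    assume "s - q / s = 0"
    moreover have "s \<noteq> 0" using that assms by auto
    ultimately have "s\<^sup>2 = q" by (simp add: field_simps power2_eq_square)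
    then show False using that by (metis real_sqrt_abs less_irrefl)
  qed
  then show ?thesis unfolding alasso_map_def by auto
qed

(* A finite Borel measure on the line whose upper tails, with the point p removed, are
   the tails of an integrable density f, is an atom at p plus the measure f dx:
   both density M (indicator (UNIV - {p})) and density lborel f are determined by
   their values on the half-lines {x<..}. *)
lemma atom_plus_density_from_tails:
  fixes M :: "real measure" and f :: "real \<Rightarrow> real" and p :: real
  assumes M: "finite_measure M" "sets M = sets borel"
    and f: "integrable lborel f" "\<And>x. 0 \<le> f x"
    and tails: "\<And>x. measure M ({x<..} - {p}) = (LINT t:{x<..}|lborel. f t)"
    and A: "A \<in> sets borel"
  shows "measure M A = indicator A p * measure M {p} + (LINT t:A|lborel. f t)"
proof -
  interpret finite_measure M by (rule M(1))
  have f_meas: "f \<in> borel_measurable borel" using borel_measurable_integrable[OF f(1)] by simp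
  let ?M' = "density M (indicator (UNIV - {p}))"
  let ?F = "density lborel (\<lambda>x. ennreal (f x))"
  have M'_eq: "emeasure ?M' B = ennreal (measure M (B - {p}))" if "B \<in> sets borel" for B
  proof -
    have "emeasure ?M' B = (\<integral>\<^sup>+x. indicator (UNIV - {p}) x * indicator B x \<partial>M)"
      using that M(2) by (subst emeasure_density) auto
    also have "\<dots> = (\<integral>\<^sup>+x. indicator (B - {p}) x \<partial>M)"
      by (intro nn_integral_cong) (auto split: split_indicator)
    also have "\<dots> = ennreal (measure M (B - {p}))"
      using that M(2) by (simp add: emeasure_eq_measure)
    finally show ?thesis .
  qed
  have F_eq: "emeasure ?F B = ennreal (LINT t:B|lborel. f t)" if "B \<in> sets borel" for B
  proof -
    have "emeasure ?F B = (\<integral>\<^sup>+x. ennreal (indicator B x * f x) \<partial>lborel)"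
      using that f_meas by (subst emeasure_density) (auto intro!: nn_integral_cong split: split_indicator)
    also have "\<dots> = ennreal (LINT t:B|lborel. f t)"
      unfolding set_lebesgue_integral_def using that f
      by (subst nn_integral_eq_integral)
        (auto simp: mult.commute[of "indicator _ _"] intro!: integrable_real_mult_indicator)
    finally show ?thesis .
  qed
  have "?M' = ?F"
  proof (rule measure_eqI_lessThan)
    fix x :: real
    show "emeasure ?M' {x<..} < \<infinity>" by (simp add: M'_eq)
    show "emeasure ?M' {x<..} = emeasure ?F {x<..}" by (simp add: M'_eq F_eq tails)
  qed (simp_all add: M(2))
  then have "ennreal (measure M (A - {p})) = ennreal (LINT t:A|lborel. f t)"
    using M'_eq[OF A] F_eq[OF A] by simp
  moreover have "0 \<le> (LINT t:A|lborel. f t)"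
    unfolding set_lebesgue_integral_def by (rule integral_nonneg_AE) (auto simp: f(2))
  ultimately have "measure M (A - {p}) = (LINT t:A|lborel. f t)" by simp
  moreover have "measure M (A - {p}) = measure M A - measure M (A \<inter> {p})"
    using A M(2) by (subst finite_measure_Diff') auto
  moreover have "measure M (A \<inter> {p}) = indicator A p * measure M {p}"
    by (cases "p \<in> A") auto
  ultimately show ?thesis by simp
qed

lemma has_derivative_sqrt_half_square_plus:
  fixes k q x :: real
  assumes q: "q > 0"
  shows "((\<lambda>x. sqrt (((k + x) / 2)\<^sup>2 + q)) has_real_derivative
           ((k + x) / 2) / sqrt (((k + x) / 2)\<^sup>2 + q) / 2) (at x)"
proof -
  have pos: "((k + x) / 2)\<^sup>2 + q > 0" using q by (simp add: add_nonneg_pos)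
  have "((\<lambda>x. ((k + x) / 2)\<^sup>2 + q) has_real_derivative (k + x) / 2) (at x)"
    by (auto intro!: derivative_eq_intros simp: power2_eq_square field_simps)
  from DERIV_chain2[OF DERIV_real_sqrt[OF pos] this] show ?thesis
    by (simp add: field_simps)
qed

(* With kn = sqrt n theta and q = n mu^2,
   the centred scaled estimator is H(W) for the standard normal W = sqrt n (ybar - theta),
   its law is the image of N01 under H, and zA x is the quantile bound for which
   H w <= x iff w <= zA x. *)
locale alasso_model =
  fixes n :: nat and \<mu> \<theta> :: real
  assumes n_pos: "n \<ge> 1" and mu_pos: "\<mu> > 0"
begin

definition kn :: real where "kn = sqrt (real n) * \<theta>"
definition qn :: real where "qn = real n * \<mu>\<^sup>2"
definition H :: "real \<Rightarrow> real" where "H w = alasso_map qn (w + kn) - kn"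
definition zA :: "real \<Rightarrow> real" where
  "zA x = (if sqrt (real n) * \<theta> + x \<ge> 0 then z2 n \<mu> \<theta> x else z1 n \<mu> \<theta> x)"

abbreviation law :: "real measure" where "law \<equiv> distr N01 borel H"

lemma qn_pos: "qn > 0"
  unfolding qn_def using n_pos mu_pos by simp

lemma sqrt_qn: "sqrt qn = sqrt (real n) * \<mu>"
  unfolding qn_def using mu_pos by (simp add: real_sqrt_mult)

lemma H_measurable[measurable]: "H \<in> borel_measurable borel"
  unfolding H_def alasso_map_def by measurable

lemma estimator_eq_H:
  "sqrt (real n) * (thetaA \<mu> (ybar n y) - \<theta>) = H (sqrt (real n) * (ybar n y - \<theta>))"
proof -
  have "(sqrt (real n) * \<mu>)\<^sup>2 = qn" unfolding qn_def by (simp add: power_mult_distrib)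
  then have "sqrt (real n) * thetaA \<mu> (ybar n y) = alasso_map qn (sqrt (real n) * ybar n y)"
    using thetaA_scaled[of "sqrt (real n)" \<mu>] n_pos mu_pos by simp
  then show ?thesis unfolding H_def kn_def by (simp add: algebra_simps)
qed

lemma estimator_law:
  assumes B: "B \<in> sets borel"
  shows "measure (P n \<theta>) {y \<in> space (P n \<theta>). sqrt (real n) * (thetaA \<mu> (ybar n y) - \<theta>) \<in> B}
    = measure law B"
proof -
  let ?W = "\<lambda>y. sqrt (real n) * (ybar n y - \<theta>)"
  note W = standardized_mean_distributed[OF n_pos, of \<theta>]
  have "{y \<in> space (P n \<theta>). sqrt (real n) * (thetaA \<mu> (ybar n y) - \<theta>) \<in> B}
      = ?W -` (H -` B) \<inter> space (P n \<theta>)"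
    by (auto simp: estimator_eq_H)
  also have "measure (P n \<theta>) \<dots> = measure (distr (P n \<theta>) lborel ?W) (H -` B)"
    using distributed_measurable[OF W] measurable_sets[OF H_measurable B]
    by (intro measure_distr[symmetric]) auto
  also have "distr (P n \<theta>) lborel ?W = N01"
    using distributed_distr_eq_density[OF W] by simp
  finally show ?thesis using B by (simp add: measure_distr)
qed

lemma H_le_iff: "H w \<le> x \<longleftrightarrow> w \<le> zA x"
proof -
  have "alasso_root qn (x + kn) - kn = zA x"
    unfolding alasso_root_def zA_def z1_def z2_def kn_def qn_def
    by (simp add: add.commute field_simps)
  then show ?thesis
    unfolding H_def using alasso_map_le_iff[OF qn_pos, of "w + kn" "x + kn"] by auto
qed

lemma law_atMost: "measure law {..x} = Phi (zA x)"
proof -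
  have "H -` {..x} = {..zA x}" using H_le_iff by auto
  then show ?thesis by (simp add: measure_distr Phi_eq_cdf cdf_def)
qed

(* The atom at -kn is the N01 mass of the dead zone shifted by -kn. *)
lemma law_atom: "measure law {- kn} = Phi (sqrt qn - kn) - Phi (- sqrt qn - kn)"
proof -
  have "H -` {- kn} = {- sqrt qn - kn .. sqrt qn - kn}"
    unfolding H_def using alasso_map_eq_0_iff[OF qn_pos] by (auto simp: abs_le_iff)
  then show ?thesis using qn_pos by (simp add: measure_distr N01_atLeastAtMost)
qed

(* Differentiability of the two branch quantiles; tA is half the derivative of the radical. *)
lemma z2_has_derivative: "(z2 n \<mu> \<theta> has_real_derivative (1 + tA n \<mu> \<theta> x) / 2) (at x)"
proof -
  have "((\<lambda>x. - (sqrt (real n) * \<theta> - x) / 2 + sqrt (((sqrt (real n) * \<theta> + x) / 2)\<^sup>2 + qn))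
     has_real_derivative 1/2 + tA n \<mu> \<theta> x / 2) (at x)"
    unfolding tA_def qn_def[symmetric]
    by (intro DERIV_add has_derivative_sqrt_half_square_plus qn_pos)
      (auto intro!: derivative_eq_intros)
  moreover have "z2 n \<mu> \<theta> =
      (\<lambda>x. - (sqrt (real n) * \<theta> - x) / 2 + sqrt (((sqrt (real n) * \<theta> + x) / 2)\<^sup>2 + qn))"
    unfolding qn_def by (rule ext) (simp only: z2_def)
  ultimately show ?thesis by (simp add: add_divide_distrib)
qed

lemma z1_has_derivative: "(z1 n \<mu> \<theta> has_real_derivative (1 - tA n \<mu> \<theta> x) / 2) (at x)"
proof -
  have "((\<lambda>x. - (sqrt (real n) * \<theta> - x) / 2 - sqrt (((sqrt (real n) * \<theta> + x) / 2)\<^sup>2 + qn))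
     has_real_derivative 1/2 - tA n \<mu> \<theta> x / 2) (at x)"
    unfolding tA_def qn_def[symmetric]
    by (intro DERIV_diff has_derivative_sqrt_half_square_plus qn_pos)
      (auto intro!: derivative_eq_intros)
  moreover have "z1 n \<mu> \<theta> =
      (\<lambda>x. - (sqrt (real n) * \<theta> - x) / 2 - sqrt (((sqrt (real n) * \<theta> + x) / 2)\<^sup>2 + qn))"
    unfolding qn_def by (rule ext) (simp only: z1_def)
  ultimately show ?thesis by (simp add: diff_divide_distrib)
qed

(* The radical dominates |(kn + x)/2|: hence |tA| <= 1 and z1 x <= x <= z2 x. *)
lemma sqrt_half_square_plus_ge:
  "\<bar>(sqrt (real n) * \<theta> + x) / 2\<bar> \<le> sqrt (((sqrt (real n) * \<theta> + x) / 2)\<^sup>2 + qn)"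
  using real_sqrt_le_mono[of "((sqrt (real n) * \<theta> + x) / 2)\<^sup>2"] qn_pos by simp

lemma radicand_pos: "0 < ((sqrt (real n) * \<theta> + x) / 2)\<^sup>2 + real n * \<mu>\<^sup>2"
  using qn_pos unfolding qn_def by (simp add: add_nonneg_pos)

lemma tA_abs_le_1: "\<bar>tA n \<mu> \<theta> x\<bar> \<le> 1"
proof -
  have "0 < sqrt (((sqrt (real n) * \<theta> + x) / 2)\<^sup>2 + qn)"
    using radicand_pos unfolding qn_def by simp
  then show ?thesis using sqrt_half_square_plus_ge[of x]
    unfolding tA_def qn_def by (simp add: abs_div divide_le_eq_1)
qed

lemma z1_le: "z1 n \<mu> \<theta> x \<le> x" and z2_ge: "x \<le> z2 n \<mu> \<theta> x"
  using sqrt_half_square_plus_ge[of x] unfolding z1_def z2_def qn_def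
  by (auto simp: field_simps abs_le_iff)

(* The branch densities, derivatives of Phi o z2 (right of the atom) and Phi o z1 (left of it)
   by the chain rule; densA is d2 on (-kn, oo) and d1 on (-oo, -kn). *)
definition d2 :: "real \<Rightarrow> real" where
  "d2 x = (1/2) * phi (z2 n \<mu> \<theta> x) * (1 + tA n \<mu> \<theta> x)"
definition d1 :: "real \<Rightarrow> real" where
  "d1 x = (1/2) * phi (z1 n \<mu> \<theta> x) * (1 - tA n \<mu> \<theta> x)"

lemma Phi_z2_has_derivative: "((\<lambda>x. Phi (z2 n \<mu> \<theta> x)) has_real_derivative d2 x) (at x)"
  using DERIV_chain2[OF Phi_has_derivative z2_has_derivative] unfolding d2_def by simp

lemma Phi_z1_has_derivative: "((\<lambda>x. Phi (z1 n \<mu> \<theta> x)) has_real_derivative d1 x) (at x)"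
  using DERIV_chain2[OF Phi_has_derivative z1_has_derivative] unfolding d1_def by simp

lemma d2_nonneg: "d2 x \<ge> 0" and d1_nonneg: "d1 x \<ge> 0"
  unfolding d2_def d1_def phi_def using tA_abs_le_1[of x] by (auto intro!: mult_nonneg_nonneg)

lemma isCont_d2: "isCont d2 x" and isCont_d1: "isCont d1 x"
proof -
  have "isCont (tA n \<mu> \<theta>) x"
    unfolding tA_def using radicand_pos[of x] by (intro continuous_intros) auto
  then show "isCont d2 x" "isCont d1 x" unfolding d2_def d1_def
    by (auto intro!: continuous_intros isCont_o2[OF _ isCont_phi]
        DERIV_isCont[OF z2_has_derivative] DERIV_isCont[OF z1_has_derivative])
qed

(* Since z2 x >= x and z1 x <= x, Phi o z2 tends to 1 and Phi o z1 to 0. *)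
lemma Phi_z2_at_top: "((\<lambda>x. Phi (z2 n \<mu> \<theta> x)) \<longlongrightarrow> 1) at_top"
  by (rule filterlim_compose[OF Phi_at_top filterlim_at_top_mono[OF filterlim_ident]])
    (auto simp: z2_ge)

lemma Phi_z1_at_bot: "((\<lambda>x. Phi (z1 n \<mu> \<theta> x)) \<longlongrightarrow> 0) at_bot"
  by (rule filterlim_compose[OF Phi_at_bot filterlim_at_bot_mono[OF filterlim_ident]])
    (auto simp: z1_le)

(* One-sided continuity, as needed by the improper fundamental theorem of calculus. *)
lemma Phi_z1_one_sided:
  "((\<lambda>x. Phi (z1 n \<mu> \<theta> x)) \<longlongrightarrow> Phi (z1 n \<mu> \<theta> c)) (at_left c)"
  "((\<lambda>x. Phi (z1 n \<mu> \<theta> x)) \<longlongrightarrow> Phi (z1 n \<mu> \<theta> c)) (at_right c)"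
  using DERIV_isCont[OF Phi_z1_has_derivative[of c]] unfolding isCont_def filterlim_at_split
  by simp_all

lemma Phi_z2_right: "((\<lambda>x. Phi (z2 n \<mu> \<theta> x)) \<longlongrightarrow> Phi (z2 n \<mu> \<theta> c)) (at_right c)"
  using DERIV_isCont[OF Phi_z2_has_derivative[of c]] unfolding isCont_def filterlim_at_split
  by simp

lemma d2_upper_tail:
  "set_integrable lborel (einterval (ereal a) \<infinity>) d2"
  "(LBINT t=ereal a..\<infinity>. d2 t) = 1 - Phi (z2 n \<mu> \<theta> a)"
  by (rule interval_integral_FTC_nonneg
        [where F="\<lambda>x. Phi (z2 n \<mu> \<theta> x)" and A="Phi (z2 n \<mu> \<theta> a)" and B=1];
      (simp add: Phi_z2_has_derivative isCont_d2 d2_nonneg ereal_tendsto_simps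
         Phi_z2_right Phi_z2_at_top)?)+

lemma d1_lower_tail_integrable: "set_integrable lborel (einterval (-\<infinity>) (ereal b)) d1"
  by (rule interval_integral_FTC_nonneg
        [where F="\<lambda>x. Phi (z1 n \<mu> \<theta> x)" and A=0 and B="Phi (z1 n \<mu> \<theta> b)"];
      simp add: Phi_z1_has_derivative isCont_d1 d1_nonneg ereal_tendsto_simps
        Phi_z1_one_sided Phi_z1_at_bot)

lemma d1_integral:
  assumes "a < b"
  shows "(LBINT t=ereal a..ereal b. d1 t) = Phi (z1 n \<mu> \<theta> b) - Phi (z1 n \<mu> \<theta> a)"
  by (rule interval_integral_FTC_nonneg[where F="\<lambda>x. Phi (z1 n \<mu> \<theta> x)"];
      simp add: assms Phi_z1_has_derivative isCont_d1 d1_nonneg ereal_tendsto_simps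
        Phi_z1_one_sided)

lemma densA_eq:
  "densA n \<mu> \<theta> x = indicator {- kn<..} x * d2 x + indicator {..<- kn} x * d1 x"
  unfolding densA_def d2_def d1_def kn_def by (auto split: split_indicator)

lemma densA_nonneg: "densA n \<mu> \<theta> x \<ge> 0"
  unfolding densA_eq using d1_nonneg[of x] d2_nonneg[of x] by (auto split: split_indicator)

lemma densA_integrable: "integrable lborel (densA n \<mu> \<theta>)"
  using d2_upper_tail(1)[of "- kn"] d1_lower_tail_integrable[of "- kn"]
  unfolding set_integrable_def densA_eq[abs_def] by simp

lemma densA_upper_tail_right:
  assumes "x \<ge> - kn"
  shows "(LINT t:{x<..}|lborel. densA n \<mu> \<theta> t) = 1 - Phi (z2 n \<mu> \<theta> x)"
proof -
  have "(LINT t:{x<..}|lborel. densA n \<mu> \<theta> t) = (LINT t:{x<..}|lborel. d2 t)"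
    by (rule set_lebesgue_integral_cong) (use assms in \<open>auto simp: densA_eq\<close>)
  also have "\<dots> = (LBINT t=ereal x..\<infinity>. d2 t)"
    by (simp add: interval_lebesgue_integral_def)
  finally show ?thesis using d2_upper_tail(2) by simp
qed

lemma densA_upper_tail_left:
  assumes "x < - kn"
  shows "(LINT t:{x<..}|lborel. densA n \<mu> \<theta> t)
     = (Phi (z1 n \<mu> \<theta> (- kn)) - Phi (z1 n \<mu> \<theta> x)) + (1 - Phi (z2 n \<mu> \<theta> (- kn)))"
proof -
  have integrable: "interval_lebesgue_integrable lborel a b (densA n \<mu> \<theta>)" for a b
    unfolding interval_lebesgue_integrable_def set_integrable_def using densA_integrable
    by (auto simp: mult.commute[of "indicator _ _"] intro!: integrable_real_mult_indicator)
  have "(LINT t:{x<..}|lborel. densA n \<mu> \<theta> t) = (LBINT t=ereal x..\<infinity>. densA n \<mu> \<theta> t)"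
    by (simp add: interval_lebesgue_integral_def)
  also have "\<dots> = (LBINT t=ereal x..ereal (- kn). densA n \<mu> \<theta> t)
                  + (LBINT t=ereal (- kn)..\<infinity>. densA n \<mu> \<theta> t)"
    by (rule interval_integral_sum[symmetric]) (rule integrable)
  also have "(LBINT t=ereal x..ereal (- kn). densA n \<mu> \<theta> t)
      = (LBINT t=ereal x..ereal (- kn). d1 t)"
    by (rule interval_integral_cong)
      (use assms in \<open>auto simp: densA_eq einterval_iff min_def max_def\<close>)
  also have "(LBINT t=ereal (- kn)..\<infinity>. densA n \<mu> \<theta> t)
      = (LBINT t=ereal (- kn)..\<infinity>. d2 t)"
    by (rule interval_integral_cong) (auto simp: densA_eq einterval_iff)
  finally show ?thesis using d2_upper_tail(2)[of "- kn"] d1_integral[OF assms] by simp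
qed

lemma law_upper_tail_without_atom:
  "measure law ({x<..} - {- kn}) = (LINT t:{x<..}|lborel. densA n \<mu> \<theta> t)"
proof -
  interpret prob_space law
    by (rule prob_space.prob_space_distr) (simp_all add: prob_space_normal_density)
  have upper: "measure law {x<..} = 1 - Phi (zA x)" for x
  proof -
    have "{x<..} = space law - {..x}" by auto
    then show ?thesis by (simp only:) (subst prob_compl, auto simp: law_atMost)
  qed
  have z_at_atom: "z1 n \<mu> \<theta> (- kn) = - sqrt qn - kn" "z2 n \<mu> \<theta> (- kn) = sqrt qn - kn"
    unfolding z1_def z2_def kn_def qn_def by simp_all
  show ?thesis
  proof (cases "x \<ge> - kn")
    case True
    then have "{x<..} - {- kn} = {x<..}" "zA x = z2 n \<mu> \<theta> x"
      unfolding zA_def kn_def by auto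
    then show ?thesis using True upper densA_upper_tail_right by simp
  next
    case False
    then have "measure law ({x<..} - {- kn}) = measure law {x<..} - measure law {- kn}"
      by (subst finite_measure_Diff) auto
    moreover have "zA x = z1 n \<mu> \<theta> x" using False unfolding zA_def kn_def by auto
    moreover have "x < - kn" using False by simp
    ultimately show ?thesis
      using upper[of x] law_atom densA_upper_tail_left[of x] z_at_atom
      by (simp add: algebra_simps)
  qed
qed

lemma law_decomposition:
  assumes A: "A \<in> sets borel"
  shows "measure law A =
           (Phi (sqrt (real n) * (- \<theta> + \<mu>)) - Phi (sqrt (real n) * (- \<theta> - \<mu>)))
             * indicator A (- sqrt (real n) * \<theta>)
         + (LINT x:A|lborel. densA n \<mu> \<theta> x)"
proof -
  have "finite_measure law"
    by (rule prob_space.finite_measure, rule prob_space.prob_space_distr)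
      (simp_all add: prob_space_normal_density)
  then have "measure law A
      = indicator A (- kn) * measure law {- kn} + (LINT x:A|lborel. densA n \<mu> \<theta> x)"
    by (rule atom_plus_density_from_tails)
      (simp_all add: densA_integrable densA_nonneg law_upper_tail_without_atom A)
  moreover have "sqrt qn - kn = sqrt (real n) * (- \<theta> + \<mu>)"
    "- sqrt qn - kn = sqrt (real n) * (- \<theta> - \<mu>)" "- kn = - sqrt (real n) * \<theta>"
    unfolding sqrt_qn kn_def by (simp_all add: algebra_simps)
  ultimately show ?thesis using law_atom by simp
qed

end

theorem mainTheorem5:
  fixes n :: nat and \<mu> \<theta> :: real
  assumes "n \<ge> 1" and "\<mu> > 0"
  shows "(\<forall>x. FA n \<mu> \<theta> x =
            (if sqrt (real n) * \<theta> + x \<ge> 0 then Phi (z2 n \<mu> \<theta> x) else 0)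
          + (if sqrt (real n) * \<theta> + x < 0 then Phi (z1 n \<mu> \<theta> x) else 0))
       \<and> (\<forall>A \<in> sets borel.
            measure (P n \<theta>)
              {y \<in> space (P n \<theta>). sqrt (real n) * (thetaA \<mu> (ybar n y) - \<theta>) \<in> A}
          = (Phi (sqrt (real n) * (- \<theta> + \<mu>)) - Phi (sqrt (real n) * (- \<theta> - \<mu>)))
              * indicator A (- sqrt (real n) * \<theta>)
            + (LINT x:A|lborel. densA n \<mu> \<theta> x))"
proof -
  interpret alasso_model n \<mu> \<theta> using assms by unfold_locales
  have "FA n \<mu> \<theta> x = Phi (zA x)" for x
    using estimator_law[of "{..x}"] law_atMost[of x] unfolding FA_def by simp
  then show ?thesis
    using estimator_law law_decomposition unfolding zA_def by simp
qed

end
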